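(* For every $k\ge1$ one has the following equalities of row vectors (of length $k+1$) of power series in $t$: $$\Big(\sum_{n\ge0}\#_{\mathcal B}\{(0,0)\xrightarrow{n}(k-i,i)\}t^n\Big)_{0\le i\le k}=t^k\,B_2F_2B_3F_3\cdots B_{k+1}F_{k+1},$$ $$\Big(\sum_{n\ge0}\#_{\mathcal D}\{(0,0)\xrightarrow{n}(k-i,i)\}t^n\Big)_{0\le i\le k}=t^k\,D_2F_2D_3F_3\cdots D_{k+1}F_{k+1}.$$
   Context: Let $\mathbb N=\{0,1,2,\dots\}$, $\mathcal B=\{(-1,1),(0,1),(1,0),(1,-1)\}$, $\mathcal D=\{(-1,1),(0,1),(1,-1)\}$. For a step set $\mathcal S$, $\#_{\mathcal S}\{(0,0)\xrightarrow{n}(i,j)\}$ is the number of sequences $p_0=(0,0),p_1,\dots,p_n=(i,j)$ of points of $\mathbb N^2$ with $p_m-p_{m-1}\in\mathcal S$. For $n\ge2$, $F_n\in\mathcal M_{n,n}(\mathbb R(t))$ is the inverse of the $n\times n$ tridiagonal matrix with all diagonal entries equal to $1$ and all entries immediately above and below the diagonal equal to $-t$ (other entries $0$); its entries are rational functions, regular at $t=0$, identified with their power series expansions in $t$. For $n\ge2$, $D_n\in\mathcal M_{n-1,n}(\mathbb R)$ is the matrix with entries $(D_n)_{r,r+1}=1$ for $1\le r\le n-1$ and all other entries $0$, and $B_n\in\mathcal M_{n-1,n}(\mathbb R)$ is the matrix with entries $(B_n)_{r,r}=(B_n)_{r,r+1}=1$ for $1\le r\le n-1$ and all other entries $0$.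 Vector and matrix rows/columns are indexed so that index $i$ (starting from $0$) corresponds to the point $(k-i,i)$. *)

theory Defs
  imports "Jordan_Normal_Form.Matrix" "HOL-Computational_Algebra.Formal_Power_Series"
begin

definition stepsB :: "(int \<times> int) set" where
  "stepsB = {(-1,1),(0,1),(1,0),(1,-1)}"

definition stepsD :: "(int \<times> int) set" where
  "stepsD = {(-1,1),(0,1),(1,-1)}"

definition num_walks :: "(int \<times> int) set \<Rightarrow> nat \<Rightarrow> nat \<times> nat \<Rightarrow> nat" where
  "num_walks S n p = card {ps :: (nat \<times> nat) list.
      length ps = Suc n \<and> ps ! 0 = (0,0) \<and> ps ! n = p \<and>
      (\<forall>m<n. (int (fst (ps ! Suc m)) - int (fst (ps ! m)),
               int (snd (ps ! Suc m)) - int (snd (ps ! m))) \<in> S)}"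

definition walk_gf :: "(int \<times> int) set \<Rightarrow> nat \<times> nat \<Rightarrow> real fps" where
  "walk_gf S p = Abs_fps (\<lambda>n. of_nat (num_walks S n p))"

definition tridiag :: "nat \<Rightarrow> real fps mat" where
  "tridiag n = mat n n (\<lambda>(i,j). if i = j then 1
                           else if i = Suc j \<or> j = Suc i then - fps_X else 0)"

definition Fmat :: "nat \<Rightarrow> real fps mat" where
  "Fmat n = (THE F. F \<in> carrier_mat n n \<and> tridiag n * F = 1\<^sub>m n \<and> F * tridiag n = 1\<^sub>m n)"

text \<open>D_n and B_n, (n-1) x n matrices; with 0-based indices r = 0..n-2:
  (D_n)_{r,r+1} = 1; (B_n)_{r,r} = (B_n)_{r,r+1} = 1.\<close>
definition Dmat :: "nat \<Rightarrow> real fps mat" where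
  "Dmat n = mat (n - 1) n (\<lambda>(r,c). if c = Suc r then 1 else 0)"

definition Bmat :: "nat \<Rightarrow> real fps mat" where
  "Bmat n = mat (n - 1) n (\<lambda>(r,c). if c = r \<or> c = Suc r then 1 else 0)"

definition chain_prod :: "(nat \<Rightarrow> real fps mat) \<Rightarrow> nat \<Rightarrow> real fps mat" where
  "chain_prod G k = foldl (\<lambda>A n. A * G n * Fmat n) (1\<^sub>m 1) [2..<k+2]"

definition gf_row :: "(int \<times> int) set \<Rightarrow> nat \<Rightarrow> real fps mat" where
  "gf_row S k = mat 1 (k+1) (\<lambda>(_,i). walk_gf S (k - i, i))"

end

(*
  Group the points of N^2 by their level x + y. The steps (-1,1) and (1,-1) stay on a level
  and the other steps of B and D climb one level, so cutting off the last step of a walk shows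
  that the row g_(k+1) of generating functions along level k+1 satisfies
  g_(k+1) = t g_(k+1) A + t g_k G, where A is the adjacency matrix of the path formed by
  level k+1 and G records the climbing steps (G = B_(k+2), resp. D_(k+2)). Since 1 - t A is
  the tridiagonal matrix inverted by F_(k+2), this is g_(k+1) = t g_k G F_(k+2), and the
  formula follows by induction from g_0 = (1).
*)
theory Submission
  imports Defs "Jordan_Normal_Form.Determinant"
begin

definition step_vec :: "nat \<times> nat \<Rightarrow> nat \<times> nat \<Rightarrow> int \<times> int" where
  "step_vec q p = (int (fst p) - int (fst q), int (snd p) - int (snd q))"

definition walks :: "(int \<times> int) set \<Rightarrow> nat \<Rightarrow> nat \<times> nat \<Rightarrow> (nat \<times> nat) list set" where
  "walks S n p = {ps. length ps = Suc n \<and> ps ! 0 = (0,0) \<and> ps ! n = p \<and>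
      (\<forall>m<n. step_vec (ps ! m) (ps ! Suc m) \<in> S)}"

definition predecessors :: "(int \<times> int) set \<Rightarrow> nat \<times> nat \<Rightarrow> (nat \<times> nat) set" where
  "predecessors S p = {q. step_vec q p \<in> S}"

lemma num_walks_eq_card_walks: "num_walks S n p = card (walks S n p)"
  by (simp add: num_walks_def walks_def step_vec_def)

lemma walks_0: "walks S 0 p = (if p = (0,0) then {[(0,0)]} else {})"
  by (auto simp: walks_def length_Suc_conv)

lemma walks_Suc:
  "walks S (Suc n) p = (\<Union>q\<in>predecessors S p. (\<lambda>ps. ps @ [p]) ` walks S n q)"
proof (intro equalityI subsetI)
  fix ps assume ps: "ps \<in> walks S (Suc n) p"
  then have len: "length ps = Suc (Suc n)" by (simp add: walks_def)
  then have nonempty: "ps \<noteq> []" by auto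
  have "last ps = p"
    using ps len last_conv_nth[OF nonempty] by (simp add: walks_def)
  with nonempty have split: "ps = butlast ps @ [p]"
    by (metis append_butlast_last_id)
  have "butlast ps \<in> walks S n (ps ! n)" "ps ! n \<in> predecessors S p"
    using ps len by (auto simp: walks_def predecessors_def nth_butlast)
  then show "ps \<in> (\<Union>q\<in>predecessors S p. (\<lambda>ps. ps @ [p]) ` walks S n q)"
    using split by blast
next
  fix ps assume "ps \<in> (\<Union>q\<in>predecessors S p. (\<lambda>ps. ps @ [p]) ` walks S n q)"
  then obtain q qs where "q \<in> predecessors S p" "qs \<in> walks S n q" "ps = qs @ [p]"
    by blast
  then show "ps \<in> walks S (Suc n) p"
    by (auto simp: walks_def predecessors_def nth_append less_Suc_eq)
qed

lemma finite_predecessors: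
  assumes "finite S"
  shows "finite (predecessors S p)"
proof (rule inj_on_finite)
  show "inj_on (\<lambda>q. step_vec q p) (predecessors S p)"
    by (auto simp: inj_on_def step_vec_def prod_eq_iff)
qed (use assms in \<open>auto simp: predecessors_def\<close>)

lemma finite_walks: "finite S \<Longrightarrow> finite (walks S n p)"
  by (induction n arbitrary: p) (simp_all add: walks_0 walks_Suc finite_predecessors)

lemma num_walks_0: "num_walks S 0 p = (if p = (0,0) then 1 else 0)"
  by (simp add: num_walks_eq_card_walks walks_0)

lemma num_walks_Suc:
  assumes "finite S"
  shows "num_walks S (Suc n) p = (\<Sum>q\<in>predecessors S p. num_walks S n q)"
proof -
  have "num_walks S (Suc n) p = (\<Sum>q\<in>predecessors S p. card ((\<lambda>ps. ps @ [p]) ` walks S n q))"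
    unfolding num_walks_eq_card_walks walks_Suc
  proof (rule card_UN_disjoint)
    show "finite (predecessors S p)" by (rule finite_predecessors[OF assms])
    show "\<forall>q\<in>predecessors S p. finite ((\<lambda>ps. ps @ [p]) ` walks S n q)"
      by (simp add: finite_walks[OF assms])
  qed (auto simp: walks_def)
  also have "\<dots> = (\<Sum>q\<in>predecessors S p. num_walks S n q)"
    by (simp add: num_walks_eq_card_walks card_image inj_on_def)
  finally show ?thesis .
qed

lemma walk_gf_eq:
  assumes "finite S"
  shows "walk_gf S p = (if p = (0,0) then 1 else 0) + fps_X * (\<Sum>q\<in>predecessors S p. walk_gf S q)"
proof (rule fps_ext)
  fix n show "fps_nth (walk_gf S p) n =
      fps_nth ((if p = (0,0) then 1 else 0) + fps_X * (\<Sum>q\<in>predecessors S p. walk_gf S q)) n"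
    by (cases n) (simp_all add: walk_gf_def num_walks_0 num_walks_Suc[OF assms] fps_sum_nth)
qed

lemma smult_smult_mat: "a \<cdot>\<^sub>m (b \<cdot>\<^sub>m A) = (a * b) \<cdot>\<^sub>m (A :: 'a :: semigroup_mult mat)"
  by (rule eq_matI) (simp_all add: mult.assoc)

lemma one_smult_mat: "1 \<cdot>\<^sub>m A = (A :: 'a :: monoid_mult mat)"
  by (rule eq_matI) simp_all

lemma ex1_inverse_mat_if_det_invertible:
  fixes A :: "'a :: comm_ring_1 mat"
  assumes A: "A \<in> carrier_mat n n" and d: "d * det A = 1"
  shows "\<exists>!B. B \<in> carrier_mat n n \<and> A * B = 1\<^sub>m n \<and> B * A = 1\<^sub>m n"
proof
  define B where "B = d \<cdot>\<^sub>m adj_mat A"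
  have adj: "adj_mat A \<in> carrier_mat n n"
    by (rule adj_mat(1)[OF A])
  have B: "B \<in> carrier_mat n n"
    using adj by (simp add: B_def)
  have "A * B = d \<cdot>\<^sub>m (A * adj_mat A)"
    using mult_smult_distrib[OF A adj] by (simp add: B_def)
  also have "\<dots> = 1\<^sub>m n"
    using adj_mat(2)[OF A] d by (simp add: smult_smult_mat one_smult_mat)
  finally have AB: "A * B = 1\<^sub>m n" .
  have "B * A = d \<cdot>\<^sub>m (adj_mat A * A)"
    using mult_smult_assoc_mat[OF adj A] by (simp add: B_def)
  also have "\<dots> = 1\<^sub>m n"
    using adj_mat(3)[OF A] d by (simp add: smult_smult_mat one_smult_mat)
  finally have BA: "B * A = 1\<^sub>m n" .
  show "B \<in> carrier_mat n n \<and> A * B = 1\<^sub>m n \<and> B * A = 1\<^sub>m n"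
    using B AB BA by simp
  fix C assume C: "C \<in> carrier_mat n n \<and> A * C = 1\<^sub>m n \<and> C * A = 1\<^sub>m n"
  have "C = C * (A * B)"
    using C AB right_mult_one_mat[of C n n] by simp
  also have "\<dots> = (C * A) * B"
    using C A B by (metis assoc_mult_mat)
  also have "\<dots> = B"
    using C B by (metis left_mult_one_mat)
  finally show "C = B" .
qed

interpretation fps_constant_coeff: comm_ring_hom "\<lambda>f :: 'a :: comm_ring_1 fps. fps_nth f 0"
  by unfold_locales simp_all

lemma tridiag_carrier: "tridiag n \<in> carrier_mat n n"
  by (simp add: tridiag_def)

lemma fps_nth_det_tridiag_0: "fps_nth (det (tridiag n)) 0 = 1"
proof -
  have "map_mat (\<lambda>f. fps_nth f 0) (tridiag n) = 1\<^sub>m n"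
    by (rule eq_matI) (auto simp: tridiag_def)
  then show ?thesis
    using fps_constant_coeff.hom_det[of "tridiag n"] by simp
qed

lemma Fmat: "Fmat n \<in> carrier_mat n n" "tridiag n * Fmat n = 1\<^sub>m n"
proof -
  have "inverse (det (tridiag n)) * det (tridiag n) = 1"
    by (rule inverse_mult_eq_1) (simp add: fps_nth_det_tridiag_0)
  from theI'[OF ex1_inverse_mat_if_det_invertible[OF tridiag_carrier this]]
  show "Fmat n \<in> carrier_mat n n" "tridiag n * Fmat n = 1\<^sub>m n"
    unfolding Fmat_def by simp_all
qed

lemma chain_prod_0: "chain_prod G 0 = 1\<^sub>m 1"
  by (simp add: chain_prod_def)

lemma chain_prod_Suc: "chain_prod G (Suc k) = chain_prod G k * G (k + 2) * Fmat (k + 2)"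
  by (simp add: chain_prod_def)

lemma chain_prod_carrier:
  assumes "\<And>k. G (k + 2) \<in> carrier_mat (Suc k) (k + 2)"
  shows "chain_prod G k \<in> carrier_mat 1 (Suc k)"
proof (induction k)
  case (Suc k)
  then show ?case
    using assms[of k] Fmat(1)[of "k + 2"] by (simp add: chain_prod_Suc)
qed (simp add: chain_prod_0)

lemma rows_eq_chain_prod:
  assumes G: "\<And>k. G (k + 2) \<in> carrier_mat (Suc k) (k + 2)"
    and R: "\<And>k. R k \<in> carrier_mat 1 (Suc k)"
    and R_0: "R 0 = 1\<^sub>m 1"
    and R_Suc: "\<And>k. R (Suc k) * tridiag (k + 2) = fps_X \<cdot>\<^sub>m (R k * G (k + 2))"
  shows "R k = fps_X ^ k \<cdot>\<^sub>m chain_prod G k"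
proof (induction k)
  case 0
  show ?case
    using R_0 by (simp add: chain_prod_0 one_smult_mat)
next
  case (Suc k)
  have C: "chain_prod G k \<in> carrier_mat 1 (Suc k)"
    by (rule chain_prod_carrier[OF G])
  have CG: "chain_prod G k * G (k + 2) \<in> carrier_mat 1 (k + 2)"
    using C G[of k] by (rule mult_carrier_mat)
  have "R (Suc k) = R (Suc k) * (tridiag (k + 2) * Fmat (k + 2))"
    using R[of "Suc k"] Fmat(2)[of "k + 2"] by simp
  also have "\<dots> = (R (Suc k) * tridiag (k + 2)) * Fmat (k + 2)"
    using R[of "Suc k"] tridiag_carrier[of "k + 2"] Fmat(1)[of "k + 2"] by simp
  also have "\<dots> = (fps_X \<cdot>\<^sub>m ((fps_X ^ k \<cdot>\<^sub>m chain_prod G k) * G (k + 2))) * Fmat (k + 2)"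
    by (simp only: R_Suc Suc.IH)
  also have "\<dots> = (fps_X * fps_X ^ k) \<cdot>\<^sub>m (chain_prod G k * G (k + 2) * Fmat (k + 2))"
    by (simp only: mult_smult_assoc_mat[OF C G[of k]] smult_smult_mat
        mult_smult_assoc_mat[OF CG Fmat(1)])
  finally show ?case
    by (simp add: chain_prod_Suc)
qed

definition transfer_mat :: "(int \<times> int) set \<Rightarrow> nat \<Rightarrow> nat \<Rightarrow> real fps mat" where
  "transfer_mat S m n =
     mat (Suc m) (Suc n) (\<lambda>(i,j). if step_vec (m - i, i) (n - j, j) \<in> S then 1 else 0)"

lemma transfer_mat_dims [simp]:
  "dim_row (transfer_mat S m n) = Suc m" "dim_col (transfer_mat S m n) = Suc n"
  by (simp_all add: transfer_mat_def)

lemma gf_row_dims [simp]: "dim_row (gf_row S k) = 1" "dim_col (gf_row S k) = Suc k"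
  by (simp_all add: gf_row_def)

lemma index_gf_row: "j \<le> k \<Longrightarrow> gf_row S k $$ (0, j) = walk_gf S (k - j, j)"
  by (simp add: gf_row_def)

lemma gf_row_mult_transfer_mat:
  assumes "j \<le> n"
  shows "(gf_row S m * transfer_mat S m n) $$ (0, j) =
    (\<Sum>q | q \<in> predecessors S (n - j, j) \<and> fst q + snd q = m. walk_gf S q)"
proof -
  let ?P = "predecessors S (n - j, j)"
  have "(gf_row S m * transfer_mat S m n) $$ (0, j) =
      (\<Sum>i<Suc m. if (m - i, i) \<in> ?P then walk_gf S (m - i, i) else 0)"
    using assms
    by (auto simp: gf_row_def transfer_mat_def predecessors_def scalar_prod_def
        atLeast0LessThan intro!: sum.cong)
  also have "\<dots> = (\<Sum>i\<in>{i \<in> {..<Suc m}. (m - i, i) \<in> ?P}. walk_gf S (m - i, i))"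
    by (rule sum.inter_filter[symmetric]) simp
  also have "\<dots> = (\<Sum>q | q \<in> ?P \<and> fst q + snd q = m. walk_gf S q)"
    by (rule sum.reindex_bij_witness[where i = snd and j = "\<lambda>i. (m - i, i)"]) auto
  finally show ?thesis .
qed

lemma walk_gf_by_levels:
  assumes "finite S" and levels: "\<forall>s\<in>S. fst s + snd s \<in> {0, 1}" and j: "j \<le> Suc k"
  shows "walk_gf S (Suc k - j, j) = fps_X *
    ((gf_row S (Suc k) * transfer_mat S (Suc k) (Suc k)) $$ (0, j) +
     (gf_row S k * transfer_mat S k (Suc k)) $$ (0, j))"
proof -
  let ?P = "predecessors S (Suc k - j, j)"
  let ?level = "\<lambda>m. {q \<in> ?P. fst q + snd q = m}"
  have "fst q + snd q \<in> {k, Suc k}" if "q \<in> ?P" for q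
  proof -
    define s where "s = step_vec q (Suc k - j, j)"
    have "s \<in> S"
      using that by (simp add: predecessors_def s_def)
    moreover have "fst s + snd s = int (Suc k) - int (fst q + snd q)"
      using j by (simp add: s_def step_vec_def of_nat_diff)
    ultimately show ?thesis
      using levels by fastforce
  qed
  then have "?level (Suc k) \<union> ?level k = ?P"
    by auto
  moreover have "(\<Sum>q\<in>?level (Suc k) \<union> ?level k. walk_gf S q) =
      (\<Sum>q\<in>?level (Suc k). walk_gf S q) + (\<Sum>q\<in>?level k. walk_gf S q)"
    by (rule sum.union_disjoint) (auto simp: finite_predecessors[OF assms(1)])
  ultimately have "(\<Sum>q\<in>?P. walk_gf S q) =
      (\<Sum>q\<in>?level (Suc k). walk_gf S q) + (\<Sum>q\<in>?level k. walk_gf S q)"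
    by simp
  moreover have "walk_gf S (Suc k - j, j) = fps_X * (\<Sum>q\<in>?P. walk_gf S q)"
    using j walk_gf_eq[OF assms(1), of "(Suc k - j, j)"] by simp
  ultimately show ?thesis
    using j by (simp add: gf_row_mult_transfer_mat del: index_mult_mat(1))
qed

lemma tridiag_eq_transfer_mat:
  assumes "{s \<in> S. fst s + snd s = 0} = {(-1, 1), (1, -1)}"
  shows "tridiag (Suc n) = 1\<^sub>m (Suc n) - fps_X \<cdot>\<^sub>m transfer_mat S n n"
proof (rule eq_matI)
  fix i j assume "i < dim_row (1\<^sub>m (Suc n) - fps_X \<cdot>\<^sub>m transfer_mat S n n)"
    and "j < dim_col (1\<^sub>m (Suc n) - fps_X \<cdot>\<^sub>m transfer_mat S n n)"
  then have ij: "i \<le> n" "j \<le> n" by auto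
  have level_0: "x \<in> S \<longleftrightarrow> x \<in> {(-1, 1), (1, -1)}" if "fst x + snd x = 0" for x :: "int \<times> int"
    using that by (simp add: assms[symmetric])
  have "step_vec (n - i, i) (n - j, j) = (int i - int j, int j - int i)"
    using ij by (simp add: step_vec_def of_nat_diff)
  then have "step_vec (n - i, i) (n - j, j) \<in> S \<longleftrightarrow> i = Suc j \<or> j = Suc i"
    using level_0[of "(int i - int j, int j - int i)"] by auto
  then show "tridiag (Suc n) $$ (i, j) = (1\<^sub>m (Suc n) - fps_X \<cdot>\<^sub>m transfer_mat S n n) $$ (i, j)"
    using ij by (auto simp: tridiag_def transfer_mat_def)
qed (auto simp: tridiag_def)

lemma gf_row_0:
  assumes "\<forall>s\<in>S. fst s + snd s \<in> {0, 1}" and "(0, 0) \<notin> S"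
  shows "gf_row S 0 = 1\<^sub>m 1"
proof -
  have "predecessors S (0, 0) = {}"
    using assms by (force simp: predecessors_def step_vec_def)
  then have "num_walks S n (0, 0) = (if n = 0 then 1 else 0)" for n
    by (cases n) (simp_all add: num_walks_eq_card_walks walks_0 walks_Suc)
  then have "walk_gf S (0, 0) = 1"
    by (simp add: walk_gf_def fps_eq_iff)
  then show ?thesis
    by (auto simp: gf_row_def)
qed

lemma gf_row_Suc_mult_tridiag:
  assumes "finite S" and "\<forall>s\<in>S. fst s + snd s \<in> {0, 1}"
    and "{s \<in> S. fst s + snd s = 0} = {(-1, 1), (1, -1)}"
  shows "gf_row S (Suc k) * tridiag (k + 2) = fps_X \<cdot>\<^sub>m (gf_row S k * transfer_mat S k (Suc k))"
proof -
  define R where "R = gf_row S (Suc k)"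
  define A where "A = transfer_mat S (Suc k) (Suc k)"
  define Y where "Y = gf_row S k * transfer_mat S k (Suc k)"
  have R: "R \<in> carrier_mat 1 (k + 2)"
    unfolding R_def by (rule carrier_matI) simp_all
  have A: "A \<in> carrier_mat (k + 2) (k + 2)"
    unfolding A_def by (rule carrier_matI) simp_all
  have Y: "Y \<in> carrier_mat 1 (k + 2)"
    unfolding Y_def by (rule carrier_matI) simp_all
  have "R * tridiag (k + 2) = R * (1\<^sub>m (k + 2) - fps_X \<cdot>\<^sub>m A)"
    using tridiag_eq_transfer_mat[OF assms(3), of "Suc k"] by (simp add: A_def)
  also have "\<dots> = R * 1\<^sub>m (k + 2) - R * (fps_X \<cdot>\<^sub>m A)"
    by (rule mult_minus_distrib_mat[OF R one_carrier_mat smult_carrier_mat[OF A]])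
  also have "\<dots> = R - fps_X \<cdot>\<^sub>m (R * A)"
    using R A by (simp add: mult_smult_distrib)
  also have "\<dots> = fps_X \<cdot>\<^sub>m Y"
  proof (rule eq_matI)
    fix i j assume "i < dim_row (fps_X \<cdot>\<^sub>m Y)" "j < dim_col (fps_X \<cdot>\<^sub>m Y)"
    then have ij: "i = 0" "j \<le> Suc k" using Y by auto
    then have "R $$ (0, j) = fps_X * ((R * A) $$ (0, j) + Y $$ (0, j))"
      using walk_gf_by_levels[OF assms(1,2), of j k]
      by (simp add: R_def A_def Y_def index_gf_row del: index_mult_mat(1))
    then show "(R - fps_X \<cdot>\<^sub>m (R * A)) $$ (i, j) = (fps_X \<cdot>\<^sub>m Y) $$ (i, j)"
      using ij R A Y by (simp add: distrib_left del: index_mult_mat(1))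
  qed (simp_all add: R_def A_def Y_def)
  finally show ?thesis
    unfolding R_def Y_def .
qed

theorem gf_row_eq_chain_prod:
  assumes "finite S" and "\<forall>s\<in>S. fst s + snd s \<in> {0, 1}"
    and level_0: "{s \<in> S. fst s + snd s = 0} = {(-1, 1), (1, -1)}"
    and G: "\<And>k. G (k + 2) = transfer_mat S k (Suc k)"
  shows "gf_row S k = fps_X ^ k \<cdot>\<^sub>m chain_prod G k"
proof (rule rows_eq_chain_prod)
  have "(0, 0) \<notin> {s \<in> S. fst s + snd s = 0}"
    unfolding level_0 by simp
  then have "(0, 0) \<notin> S"
    by simp
  then show "gf_row S 0 = 1\<^sub>m 1"
    by (rule gf_row_0[OF assms(2)])
  show "gf_row S (Suc k) * tridiag (k + 2) = fps_X \<cdot>\<^sub>m (gf_row S k * G (k + 2))" for k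
    unfolding G by (rule gf_row_Suc_mult_tridiag[OF assms(1-3)])
  show "G (k + 2) \<in> carrier_mat (Suc k) (k + 2)" for k
    unfolding G by (rule carrier_matI) simp_all
  show "gf_row S k \<in> carrier_mat 1 (Suc k)" for k
    by (rule carrier_matI) simp_all
qed

lemma index_transfer_mat_Suc:
  assumes "i \<le> k" and "j \<le> Suc k"
  shows "transfer_mat S k (Suc k) $$ (i, j) =
    (if (1 + int i - int j, int j - int i) \<in> S then 1 else 0)"
proof -
  have "step_vec (k - i, i) (Suc k - j, j) = (1 + int i - int j, int j - int i)"
    using assms by (simp add: step_vec_def of_nat_diff)
  then show ?thesis
    using assms by (simp add: transfer_mat_def)
qed

lemma Bmat_eq_transfer_mat: "Bmat (k + 2) = transfer_mat stepsB k (Suc k)"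
proof (rule eq_matI)
  fix i j assume "i < dim_row (transfer_mat stepsB k (Suc k))"
    and "j < dim_col (transfer_mat stepsB k (Suc k))"
  then have "i \<le> k" "j \<le> Suc k" by auto
  moreover have "(1 + int i - int j, int j - int i) \<in> stepsB \<longleftrightarrow> j = i \<or> j = Suc i"
    by (auto simp: stepsB_def)
  ultimately show "Bmat (k + 2) $$ (i, j) = transfer_mat stepsB k (Suc k) $$ (i, j)"
    by (simp add: index_transfer_mat_Suc Bmat_def)
qed (simp_all add: Bmat_def)

lemma Dmat_eq_transfer_mat: "Dmat (k + 2) = transfer_mat stepsD k (Suc k)"
proof (rule eq_matI)
  fix i j assume "i < dim_row (transfer_mat stepsD k (Suc k))"
    and "j < dim_col (transfer_mat stepsD k (Suc k))"
  then have "i \<le> k" "j \<le> Suc k" by auto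
  moreover have "(1 + int i - int j, int j - int i) \<in> stepsD \<longleftrightarrow> j = Suc i"
    by (auto simp: stepsD_def)
  ultimately show "Dmat (k + 2) $$ (i, j) = transfer_mat stepsD k (Suc k) $$ (i, j)"
    by (simp add: index_transfer_mat_Suc Dmat_def)
qed (simp_all add: Dmat_def)

theorem proposition2p10:
  fixes k :: nat
  assumes "k \<ge> 1"
  shows "gf_row stepsB k = fps_X ^ k \<cdot>\<^sub>m chain_prod Bmat k \<and>
         gf_row stepsD k = fps_X ^ k \<cdot>\<^sub>m chain_prod Dmat k"
proof \<comment> \<open>the identities hold for k = 0 as well\<close>
  show "gf_row stepsB k = fps_X ^ k \<cdot>\<^sub>m chain_prod Bmat k"
    by (rule gf_row_eq_chain_prod[OF _ _ _ Bmat_eq_transfer_mat]) (auto simp: stepsB_def)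
  show "gf_row stepsD k = fps_X ^ k \<cdot>\<^sub>m chain_prod Dmat k"
    by (rule gf_row_eq_chain_prod[OF _ _ _ Dmat_eq_transfer_mat]) (auto simp: stepsD_def)
qed

end
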